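(* Let $G$ and $H$ be connected graphs of order at least two such that neither $G$ nor $H$ is a complete graph, and suppose $\textnormal{diam}(G\diamond H)=3$. (a) If $\{g,g'\}$ is a $\gamma_G$-pair and $\{h,h'\}$ is a $\gamma_H$-pair, then $O_{\rm SR}(G\diamond H)=\mathcal{B}$. (b) If $G$ has at least two distinct universal vertices and $\textnormal{diam}(H)\ge 3$, then $O_{\rm SR}(G\diamond H)=\mathcal{B}$. (c) Suppose $G$ has no $\gamma_G$-pair and no universal vertex, but $G$ has a pair of distinct adjacent twins and $H$ has a $\gamma_H$-pair. Then $O_{\rm SR}(G\diamond H)=\mathcal{B}$. (d) Suppose $G$ has no $\gamma_G$-pair and no universal vertex, and $H$ has a $\gamma_H$-pair and at least two distinct vertices of $H$ belong to no $\gamma_H$-pair. Then $O_{\rm SR}(G\diamond H)=\mathcal{B}$. (e) Suppose $G$ has no $\gamma_G$-pair and no universal vertex, and $H$ has distinct adjacent twins $h_1,h_2$ such that both $\{h_1,h\}$ and $\{h_2,h\}$ are $\gamma_H$-pairs for some $h\in V(H)\setminus\{h_1,h_2\}$. Then $O_{\rm SR}(G\diamond H)=\mathcal{B}$.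
   Context: All graphs are finite, simple and undirected; $\overline{X}$ denotes the complement of $X$; $\textnormal{diam}$ denotes diameter; $N_X[x]=N_X(x)\cup\{x\}$. A universal vertex of $X$ is a vertex adjacent to all other vertices. Distinct vertices $u,w$ are adjacent twins if $N[u]=N[w]$. A set $D$ is a dominating set of $X$ if $\bigcup_{x\in D}N[x]=V(X)$. A pair $\{u,w\}$ is a $\gamma_X$-pair if $\{u,w\}$ is a minimum dominating set of $X$ with $N_X[u]\cap N_X[w]=\emptyset$ and $N_X[u]\cup N_X[w]=V(X)$. The modular product $G\diamond H$ has vertex set $V(G)\times V(H)$, and $(g,h)$, $(g',h')$ are adjacent iff one of the following holds: ($g=g'$ and $hh'\in E(H)$), or ($h=h'$ and $gg'\in E(G)$), or ($gg'\in E(G)$ and $hh'\in E(H)$), or ($gg'\in E(\overline{G})$ and $hh'\in E(\overline{H})$). A set $S\subseteq V(X)$ is a strong resolving set of a connected graph $X$ if for all distinct $x,y\in V(X)$ there exists $z\in S$ such that $x$ lies on a $y$–$z$ geodesic or $y$ lies on an $x$–$z$ geodesic. The Maker–Breaker strong resolving game on $X$: Maker and Breaker alternately select a not-yet-chosen vertex of $X$; Maker wins if the vertices he selects contain a strong resolving set of $X$, Breaker wins otherwise. In the M-game Maker moves first, in the B-game Breaker moves first. $O_{\rm SR}(X)=\mathcal{M}$ if Maker has a winning strategy in both games, $\mathcal{B}$ if Breaker has a winning strategy in both, and $\mathcal{N}$ if the first player has a winning strategy in each. *)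

theory Defs
  imports Main
begin

definition graph :: "'a set \<Rightarrow> ('a \<Rightarrow> 'a \<Rightarrow> bool) \<Rightarrow> bool" where
  "graph V E \<longleftrightarrow> finite V \<and> (\<forall>x y. E x y \<longrightarrow> x \<in> V \<and> y \<in> V)
     \<and> (\<forall>x y. E x y \<longrightarrow> E y x) \<and> (\<forall>x. \<not> E x x)"

definition cnbhd :: "('a \<Rightarrow> 'a \<Rightarrow> bool) \<Rightarrow> 'a \<Rightarrow> 'a set" where
  "cnbhd E x = insert x {y. E x y}"

fun walk :: "('a \<Rightarrow> 'a \<Rightarrow> bool) \<Rightarrow> 'a list \<Rightarrow> bool" where
  "walk E [] = False"
| "walk E [x] = True"
| "walk E (x # y # xs) = (E x y \<and> walk E (y # xs))"

definition connected_graph :: "'a set \<Rightarrow> ('a \<Rightarrow> 'a \<Rightarrow> bool) \<Rightarrow> bool" where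
  "connected_graph V E \<longleftrightarrow> V \<noteq> {} \<and>
     (\<forall>x\<in>V. \<forall>y\<in>V. \<exists>xs. walk E xs \<and> hd xs = x \<and> last xs = y)"

definition gdist :: "('a \<Rightarrow> 'a \<Rightarrow> bool) \<Rightarrow> 'a \<Rightarrow> 'a \<Rightarrow> nat" where
  "gdist E x y = (LEAST n. \<exists>xs. walk E xs \<and> hd xs = x \<and> last xs = y \<and> length xs = Suc n)"

definition diam :: "'a set \<Rightarrow> ('a \<Rightarrow> 'a \<Rightarrow> bool) \<Rightarrow> nat" where
  "diam V E = Max {gdist E x y | x y. x \<in> V \<and> y \<in> V}"

definition complete_graph :: "'a set \<Rightarrow> ('a \<Rightarrow> 'a \<Rightarrow> bool) \<Rightarrow> bool" where
  "complete_graph V E \<longleftrightarrow> (\<forall>x\<in>V. \<forall>y\<in>V. x \<noteq> y \<longrightarrow> E x y)"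

definition compl_edge :: "'a set \<Rightarrow> ('a \<Rightarrow> 'a \<Rightarrow> bool) \<Rightarrow> 'a \<Rightarrow> 'a \<Rightarrow> bool" where
  "compl_edge V E x y \<longleftrightarrow> x \<in> V \<and> y \<in> V \<and> x \<noteq> y \<and> \<not> E x y"

definition universal_vertex :: "'a set \<Rightarrow> ('a \<Rightarrow> 'a \<Rightarrow> bool) \<Rightarrow> 'a \<Rightarrow> bool" where
  "universal_vertex V E u \<longleftrightarrow> u \<in> V \<and> (\<forall>v\<in>V. v \<noteq> u \<longrightarrow> E u v)"

definition adjacent_twins :: "'a set \<Rightarrow> ('a \<Rightarrow> 'a \<Rightarrow> bool) \<Rightarrow> 'a \<Rightarrow> 'a \<Rightarrow> bool" where
  "adjacent_twins V E u w \<longleftrightarrow> u \<in> V \<and> w \<in> V \<and> u \<noteq> w \<and> cnbhd E u = cnbhd E w"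

definition dominating_set :: "'a set \<Rightarrow> ('a \<Rightarrow> 'a \<Rightarrow> bool) \<Rightarrow> 'a set \<Rightarrow> bool" where
  "dominating_set V E D \<longleftrightarrow> D \<subseteq> V \<and> (\<Union>x\<in>D. cnbhd E x) = V"

definition min_dominating_set :: "'a set \<Rightarrow> ('a \<Rightarrow> 'a \<Rightarrow> bool) \<Rightarrow> 'a set \<Rightarrow> bool" where
  "min_dominating_set V E D \<longleftrightarrow> dominating_set V E D \<and>
     (\<forall>D'. dominating_set V E D' \<longrightarrow> card D \<le> card D')"

definition gamma_pair :: "'a set \<Rightarrow> ('a \<Rightarrow> 'a \<Rightarrow> bool) \<Rightarrow> 'a \<Rightarrow> 'a \<Rightarrow> bool" where
  "gamma_pair V E u w \<longleftrightarrow> min_dominating_set V E {u, w} \<and>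
     cnbhd E u \<inter> cnbhd E w = {} \<and> cnbhd E u \<union> cnbhd E w = V"

definition modprod_E ::
  "'a set \<Rightarrow> ('a \<Rightarrow> 'a \<Rightarrow> bool) \<Rightarrow> 'b set \<Rightarrow> ('b \<Rightarrow> 'b \<Rightarrow> bool) \<Rightarrow> ('a \<times> 'b) \<Rightarrow> ('a \<times> 'b) \<Rightarrow> bool" where
  "modprod_E VG EG VH EH p q \<longleftrightarrow> p \<in> VG \<times> VH \<and> q \<in> VG \<times> VH \<and>
     ((fst p = fst q \<and> EH (snd p) (snd q)) \<or>
      (snd p = snd q \<and> EG (fst p) (fst q)) \<or>
      (EG (fst p) (fst q) \<and> EH (snd p) (snd q)) \<or>
      (compl_edge VG EG (fst p) (fst q) \<and> compl_edge VH EH (snd p) (snd q)))"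

definition strong_resolving_set :: "'a set \<Rightarrow> ('a \<Rightarrow> 'a \<Rightarrow> bool) \<Rightarrow> 'a set \<Rightarrow> bool" where
  "strong_resolving_set V E S \<longleftrightarrow> S \<subseteq> V \<and>
     (\<forall>x\<in>V. \<forall>y\<in>V. x \<noteq> y \<longrightarrow> (\<exists>z\<in>S.
        gdist E y x + gdist E x z = gdist E y z \<or>
        gdist E x y + gdist E y z = gdist E x z))"

text \<open>Positions: M = vertices chosen by Maker, B = vertices chosen by Breaker.
  The game ends when every vertex of V is chosen; Maker wins iff W M holds then.
  mw_M / bw_M : Maker is to move; mw_B / bw_B : Breaker is to move.
  mw_* = Maker has a winning strategy from the position, bw_* = Breaker has one.\<close>

inductive mw_M and mw_B for V :: "'v set" and W :: "'v set \<Rightarrow> bool" where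
  mwM_end: "M \<union> B \<supseteq> V \<Longrightarrow> W M \<Longrightarrow> mw_M V W M B"
| mwB_end: "M \<union> B \<supseteq> V \<Longrightarrow> W M \<Longrightarrow> mw_B V W M B"
| mwM_step: "v \<in> V - (M \<union> B) \<Longrightarrow> mw_B V W (insert v M) B \<Longrightarrow> mw_M V W M B"
| mwB_step: "V - (M \<union> B) \<noteq> {} \<Longrightarrow> (\<And>v. v \<in> V - (M \<union> B) \<Longrightarrow> mw_M V W M (insert v B))
               \<Longrightarrow> mw_B V W M B"

inductive bw_M and bw_B for V :: "'v set" and W :: "'v set \<Rightarrow> bool" where
  bwM_end: "M \<union> B \<supseteq> V \<Longrightarrow> \<not> W M \<Longrightarrow> bw_M V W M B"
| bwB_end: "M \<union> B \<supseteq> V \<Longrightarrow> \<not> W M \<Longrightarrow> bw_B V W M B"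
| bwB_step: "v \<in> V - (M \<union> B) \<Longrightarrow> bw_M V W M (insert v B) \<Longrightarrow> bw_B V W M B"
| bwM_step: "V - (M \<union> B) \<noteq> {} \<Longrightarrow> (\<And>v. v \<in> V - (M \<union> B) \<Longrightarrow> bw_B V W (insert v M) B)
               \<Longrightarrow> bw_M V W M B"

definition sr_win :: "'a set \<Rightarrow> ('a \<Rightarrow> 'a \<Rightarrow> bool) \<Rightarrow> 'a set \<Rightarrow> bool" where
  "sr_win V E M \<longleftrightarrow> (\<exists>S\<subseteq>M. strong_resolving_set V E S)"

datatype outcome = Outcome_M | Outcome_B | Outcome_N | Outcome_P

text \<open>Outcome of the Maker--Breaker strong resolving game. M-game: Maker moves first
  (start position mw_M/bw_M with nothing chosen); B-game: Breaker moves first.\<close>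
definition O_SR :: "'a set \<Rightarrow> ('a \<Rightarrow> 'a \<Rightarrow> bool) \<Rightarrow> outcome" where
  "O_SR V E =
    (let W = sr_win V E in
     if mw_M V W {} {} \<and> mw_B V W {} {} then Outcome_M
     else if bw_M V W {} {} \<and> bw_B V W {} {} then Outcome_B
     else if mw_M V W {} {} \<and> bw_B V W {} {} then Outcome_N
     else Outcome_P)"

end

(*
  If two vertices u, v are mutually maximally distant, every strong resolving set contains u
  or v. In the modular product of diameter 3 this applies to vertices at distance 3, and to
  non-adjacent vertices of eccentricity 2. Adjacency in the modular product is read off closed
  neighbourhoods: (a, b) ~ (c, d) iff c \<in> N[a] exactly when d \<in> N[b]. Hence closed twins in
  one factor combined with a gamma-pair (a partition of the vertex set into two closed
  neighbourhoods) in the other factor give vertices at distance 3, while in case (d) a vertex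
  (g, x) with x in no gamma-pair has eccentricity 2. In every case these forced pairs contain
  a 4-cycle a b c d, or two disjoint cherries t q, t r, and Breaker wins both games by a
  pairing strategy that keeps Maker from meeting all of them.
*)
theory Submission
  imports Defs
begin

definition reachable :: "('a \<Rightarrow> 'a \<Rightarrow> bool) \<Rightarrow> 'a \<Rightarrow> 'a \<Rightarrow> bool" where
  "reachable E u v \<longleftrightarrow> (\<exists>xs. walk E xs \<and> hd xs = u \<and> last xs = v)"

definition far :: "('a \<Rightarrow> 'a \<Rightarrow> bool) \<Rightarrow> 'a \<Rightarrow> 'a \<Rightarrow> bool" where
  "far E u v \<longleftrightarrow> u \<noteq> v \<and> \<not> E u v \<and> \<not> (\<exists>w. E u w \<and> E w v)"

lemma gdist_le_walk:
  assumes "walk E xs" "hd xs = u" "last xs = v" "length xs = Suc n"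
  shows "gdist E u v \<le> n"
  unfolding gdist_def by (rule Least_le) (use assms in blast)

lemma shortest_walk_exists:
  assumes "reachable E u v"
  obtains xs where "walk E xs" "hd xs = u" "last xs = v" "length xs = Suc (gdist E u v)"
proof -
  from assms obtain xs where xs: "walk E xs" "hd xs = u" "last xs = v"
    unfolding reachable_def by blast
  then have "length xs = Suc (length xs - 1)"
    by (cases xs) auto
  with xs have "\<exists>n xs. walk E xs \<and> hd xs = u \<and> last xs = v \<and> length xs = Suc n"
    by blast
  then have "\<exists>xs. walk E xs \<and> hd xs = u \<and> last xs = v \<and> length xs = Suc (gdist E u v)"
    unfolding gdist_def by (rule LeastI_ex)
  with that show thesis by blast
qed

lemma walk_append:
  assumes "walk E xs" "walk E ys" "last xs = hd ys"
  shows "walk E (xs @ tl ys) \<and> hd (xs @ tl ys) = hd xs \<and> last (xs @ tl ys) = last ys"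
  using assms
proof (induction E xs rule: walk.induct)
  case (2 E x) then show ?case by (cases ys) auto
next
  case (3 E x y xs) then show ?case by (cases xs) auto
qed auto

lemma reachable_trans:
  assumes "reachable E x y" "reachable E y z"
  shows "reachable E x z"
  using assms walk_append unfolding reachable_def by metis

lemma gdist_le_2_cases:
  assumes "reachable E u v"
  shows "gdist E u v = 0 \<Longrightarrow> u = v"
    and "gdist E u v = 1 \<Longrightarrow> E u v"
    and "gdist E u v = 2 \<Longrightarrow> \<exists>w. E u w \<and> E w v"
proof -
  obtain xs where xs: "walk E xs" "hd xs = u" "last xs = v" "length xs = Suc (gdist E u v)"
    using assms by (rule shortest_walk_exists)
  show "u = v" if "gdist E u v = 0"
  proof -
    from that xs(4) obtain a where "xs = [a]"
      by (auto simp: length_Suc_conv)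
    with xs show ?thesis by simp
  qed
  show "E u v" if "gdist E u v = 1"
  proof -
    from that xs(4) obtain a b where "xs = [a, b]"
      by (auto simp: length_Suc_conv)
    with xs show ?thesis by simp
  qed
  show "\<exists>w. E u w \<and> E w v" if "gdist E u v = 2"
  proof -
    from that xs(4) obtain a b c where "xs = [a, b, c]"
      by (auto simp: length_Suc_conv numeral_2_eq_2)
    with xs show ?thesis by auto
  qed
qed

lemma gdist_ge_2:
  assumes "reachable E u v" "u \<noteq> v" "\<not> E u v"
  shows "2 \<le> gdist E u v"
  using gdist_le_2_cases(1,2)[OF assms(1)] assms(2,3) by linarith

lemma gdist_ge_3_if_far:
  assumes "reachable E u v" "far E u v"
  shows "3 \<le> gdist E u v"
proof (rule ccontr)
  assume "\<not> 3 \<le> gdist E u v"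
  then consider "gdist E u v = 0" | "gdist E u v = 1" | "gdist E u v = 2"
    by linarith
  then show False
    using gdist_le_2_cases[OF assms(1)] assms(2) unfolding far_def by cases blast+
qed

lemma gdist_le_2_if_not_far:
  assumes "\<not> far E u v"
  shows "gdist E u v \<le> 2"
proof -
  consider "u = v" | "E u v" | w where "E u w" "E w v"
    using assms unfolding far_def by blast
  then show ?thesis
  proof cases
    case 1 then show ?thesis using gdist_le_walk[of E "[u]" u v 0] by simp
  next
    case 2 then show ?thesis using gdist_le_walk[of E "[u, v]" u v 1] by simp
  next
    case 3 then show ?thesis using gdist_le_walk[of E "[u, w, v]" u v 2] by simp
  qed
qed

lemma finite_gdist_values:
  assumes "finite V"
  shows "finite {gdist E x y | x y. x \<in> V \<and> y \<in> V}"
proof -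
  have "{gdist E x y | x y. x \<in> V \<and> y \<in> V} = (\<lambda>(x, y). gdist E x y) ` (V \<times> V)"
    by auto
  with assms show ?thesis by simp
qed

lemma gdist_le_diam:
  assumes "finite V" "x \<in> V" "y \<in> V"
  shows "gdist E x y \<le> diam V E"
  unfolding diam_def using finite_gdist_values[OF assms(1)] assms(2,3) by (intro Max_ge) auto

lemma far_pair_if_diam_ge_3:
  assumes "finite V" "V \<noteq> {}" "3 \<le> diam V E"
  obtains x y where "x \<in> V" "y \<in> V" "far E x y"
proof -
  let ?D = "{gdist E x y | x y. x \<in> V \<and> y \<in> V}"
  have "?D \<noteq> {}"
    using assms(2) by blast
  then have "Max ?D \<in> ?D"
    using finite_gdist_values[OF assms(1)] by (intro Max_in)
  then obtain x y where xy: "x \<in> V" "y \<in> V" "gdist E x y = diam V E"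
    unfolding diam_def by auto
  have "far E x y"
  proof (rule ccontr)
    assume "\<not> far E x y"
    then have "gdist E x y \<le> 2"
      by (rule gdist_le_2_if_not_far)
    with xy(3) assms(3) show False
      by linarith
  qed
  with xy that show thesis by blast
qed

definition mutually_maximally_distant :: "'a set \<Rightarrow> ('a \<Rightarrow> 'a \<Rightarrow> bool) \<Rightarrow> 'a \<Rightarrow> 'a \<Rightarrow> bool" where
  "mutually_maximally_distant V E u v \<longleftrightarrow>
     (\<forall>z\<in>V. gdist E u z \<le> gdist E u v) \<and> (\<forall>z\<in>V. gdist E v z \<le> gdist E v u)"

definition forced_pair :: "'a set \<Rightarrow> ('a \<Rightarrow> 'a \<Rightarrow> bool) \<Rightarrow> 'a \<Rightarrow> 'a \<Rightarrow> bool" where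
  "forced_pair V E u v \<longleftrightarrow> (\<forall>S. strong_resolving_set V E S \<longrightarrow> u \<in> S \<or> v \<in> S)"

lemma forced_pair_if_mutually_maximally_distant:
  assumes conn: "\<forall>x\<in>V. \<forall>y\<in>V. reachable E x y"
    and uv: "u \<in> V" "v \<in> V" "u \<noteq> v" and mmd: "mutually_maximally_distant V E u v"
  shows "forced_pair V E u v"
  unfolding forced_pair_def
proof (intro allI impI)
  fix S assume "strong_resolving_set V E S"
  with uv obtain z where z: "z \<in> S" "z \<in> V"
    "gdist E v u + gdist E u z = gdist E v z \<or> gdist E u v + gdist E v z = gdist E u z"
    unfolding strong_resolving_set_def by blast
  moreover have "gdist E u z \<le> gdist E u v" "gdist E v z \<le> gdist E v u"
    using mmd z(2) unfolding mutually_maximally_distant_def by auto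
  ultimately have "gdist E u z = 0 \<or> gdist E v z = 0"
    by linarith
  with conn uv z(2) have "z = u \<or> z = v"
    using gdist_le_2_cases(1)[of E u z] gdist_le_2_cases(1)[of E v z] by auto
  with z(1) show "u \<in> S \<or> v \<in> S" by blast
qed

lemma mutually_maximally_distant_if_far:
  assumes conn: "\<forall>x\<in>V. \<forall>y\<in>V. reachable E x y" and diam: "\<forall>x\<in>V. \<forall>y\<in>V. gdist E x y \<le> 3"
    and uv: "u \<in> V" "v \<in> V" "far E u v" "far E v u"
  shows "mutually_maximally_distant V E u v"
  unfolding mutually_maximally_distant_def
proof (intro conjI ballI)
  fix z assume "z \<in> V"
  with diam uv have "gdist E u z \<le> 3" "gdist E v z \<le> 3" by auto
  moreover have "3 \<le> gdist E u v" "3 \<le> gdist E v u"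
    using gdist_ge_3_if_far[of E u v] gdist_ge_3_if_far[of E v u] conn uv by blast+
  ultimately show "gdist E u z \<le> gdist E u v" "gdist E v z \<le> gdist E v u"
    by linarith+
qed

lemma mutually_maximally_distant_if_eccentricity_le_2:
  assumes conn: "\<forall>x\<in>V. \<forall>y\<in>V. reachable E x y"
    and uv: "u \<in> V" "v \<in> V" "u \<noteq> v" "\<not> E u v" "\<not> E v u"
    and ecc: "\<forall>z\<in>V. \<not> far E u z \<and> \<not> far E v z"
  shows "mutually_maximally_distant V E u v"
  unfolding mutually_maximally_distant_def
proof (intro conjI ballI)
  fix z assume "z \<in> V"
  with ecc have "gdist E u z \<le> 2" "gdist E v z \<le> 2"
    using gdist_le_2_if_not_far[of E u z] gdist_le_2_if_not_far[of E v z] by blast+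
  moreover have "2 \<le> gdist E u v" "2 \<le> gdist E v u"
    using gdist_ge_2[of E u v] gdist_ge_2[of E v u] conn uv by blast+
  ultimately show "gdist E u z \<le> gdist E u v" "gdist E v z \<le> gdist E v u"
    by linarith+
qed

lemma maker_breaker_exclusive:
  shows "mw_M V W M B \<Longrightarrow> bw_M V W M B \<Longrightarrow> False"
    and "mw_B V W M B \<Longrightarrow> bw_B V W M B \<Longrightarrow> False"
proof (induction rule: mw_M_mw_B.inducts)
  case (mwM_end M B) then show ?case by (auto elim: bw_M.cases)
next
  case (mwB_end M B) then show ?case by (auto elim: bw_B.cases)
next
  case (mwM_step v M B)
  from mwM_step(4) show ?case
  proof (cases rule: bw_M.cases)
    case bwM_end then show ?thesis using mwM_step(1) by auto
  next
    case bwM_step then show ?thesis using mwM_step(1,3) by blast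
  qed
next
  case (mwB_step M B)
  from mwB_step(4) show ?case
  proof (cases rule: bw_B.cases)
    case bwB_end then show ?thesis using mwB_step(1) by auto
  next
    case (bwB_step v) then show ?thesis using mwB_step(3) by blast
  qed
qed

lemma O_SR_eq_Outcome_B:
  assumes "bw_M V (sr_win V E) {} {}" "bw_B V (sr_win V E) {} {}"
  shows "O_SR V E = Outcome_B"
  using assms maker_breaker_exclusive(1) unfolding O_SR_def Let_def by auto

definition pairing_safe :: "'a set \<Rightarrow> ('a \<Rightarrow> 'a) \<Rightarrow> 'a set \<Rightarrow> 'a set \<Rightarrow> bool" where
  "pairing_safe C \<sigma> M B \<longleftrightarrow> M \<inter> B = {} \<and> (\<forall>x\<in>C. x \<in> M \<longrightarrow> \<sigma> x \<in> B)"

lemma pairing_safe_after_maker_move: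
  assumes "C \<subseteq> V" and pairing: "\<And>x. x \<in> C \<Longrightarrow> \<sigma> x \<in> C \<and> \<sigma> x \<noteq> x \<and> \<sigma> (\<sigma> x) = x"
    and safe_MB: "pairing_safe C \<sigma> M B" and v: "v \<in> V - (M \<union> B)"
  obtains (reply) "v \<in> C" "\<sigma> v \<in> V - (insert v M \<union> B)" | (safe) "pairing_safe C \<sigma> (insert v M) B"
proof (cases "v \<in> C \<and> \<sigma> v \<notin> M \<union> B")
  case True
  with pairing[of v] \<open>C \<subseteq> V\<close> show thesis
    by (intro reply) auto
next
  case False
  have "\<sigma> v \<in> B" if "v \<in> C"
  proof -
    have "\<sigma> v \<notin> M"
    proof
      assume "\<sigma> v \<in> M"
      with safe_MB pairing[OF that] have "v \<in> B"
        unfolding pairing_safe_def by metis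
      with v show False by blast
    qed
    with False that show ?thesis by blast
  qed
  with safe_MB v have "pairing_safe C \<sigma> (insert v M) B"
    unfolding pairing_safe_def by auto
  then show thesis
    by (rule safe)
qed

text \<open>Breaker answers every vertex Maker takes in C by its partner under the fixed-point-free
  involution \<sigma>; B0 is a set Breaker owns in advance.\<close>
lemma breaker_pairing_strategy:
  assumes "finite V" and "C \<subseteq> V"
    and pairing: "\<And>x. x \<in> C \<Longrightarrow> \<sigma> x \<in> C \<and> \<sigma> x \<noteq> x \<and> \<sigma> (\<sigma> x) = x"
    and loses: "\<And>M. M \<inter> B0 = {} \<Longrightarrow> \<forall>x\<in>C. x \<in> M \<longrightarrow> \<sigma> x \<notin> M \<Longrightarrow> \<not> W M"
    and "pairing_safe C \<sigma> M B" "B0 \<subseteq> B"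
  shows "bw_M V W M B"
  using assms(5,6)
proof (induction "card (V - (M \<union> B))" arbitrary: M B rule: less_induct)
  case less
  have IH: "bw_M V W M' B'"
    if "v \<in> V - (M \<union> B)" "insert v (M \<union> B) \<subseteq> M' \<union> B'" "pairing_safe C \<sigma> M' B'" "B0 \<subseteq> B'"
    for v M' B'
  proof (rule less.hyps)
    have "V - (M' \<union> B') \<subset> V - (M \<union> B)"
      using that(1,2) by blast
    then show "card (V - (M' \<union> B')) < card (V - (M \<union> B))"
      using \<open>finite V\<close> by (simp add: psubset_card_mono)
  qed (use that in auto)
  have lost: "\<not> W M'" if "pairing_safe C \<sigma> M' B" for M'
    using that less.prems(2) by (intro loses) (auto simp: pairing_safe_def)
  show ?case
  proof (cases "V \<subseteq> M \<union> B")
    case True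
    with lost[OF less.prems(1)] show ?thesis
      by (intro bwM_end)
  next
    case False
    show ?thesis
    proof (rule bwM_step)
      show "V - (M \<union> B) \<noteq> {}" using False by auto
    next
      fix v assume v: "v \<in> V - (M \<union> B)"
      show "bw_B V W (insert v M) B"
      proof (rule pairing_safe_after_maker_move[OF \<open>C \<subseteq> V\<close> pairing less.prems(1) v])
        assume reply: "v \<in> C" "\<sigma> v \<in> V - (insert v M \<union> B)"
        then have "pairing_safe C \<sigma> (insert v M) (insert (\<sigma> v) B)"
          using v less.prems(1) unfolding pairing_safe_def by auto
        with reply v less.prems(2) show ?thesis
          by (intro bwB_step[of "\<sigma> v"] IH[of v]) auto
      next
        assume safe: "pairing_safe C \<sigma> (insert v M) B"
        show ?thesis
        proof (cases "V \<subseteq> insert v M \<union> B")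
          case True
          with lost[OF safe] show ?thesis
            by (intro bwB_end)
        next
          case False
          then obtain w where w: "w \<in> V - (insert v M \<union> B)" by auto
          with safe have "pairing_safe C \<sigma> (insert v M) (insert w B)"
            unfolding pairing_safe_def by auto
          with w v less.prems(2) show ?thesis
            by (intro bwB_step[of w] IH[of v]) auto
        qed
      qed
    qed
  qed
qed

lemma sr_win_imp_forced_pair_hit:
  assumes "sr_win V E M" "forced_pair V E u v"
  shows "u \<in> M \<or> v \<in> M"
  using assms unfolding sr_win_def forced_pair_def by blast

lemma O_SR_eq_Outcome_B_if_forced_4_cycle:
  assumes "finite V" and "{a, b, c, d} \<subseteq> V" and "distinct [a, b, c, d]"
    and "forced_pair V E a b" "forced_pair V E b c" "forced_pair V E c d" "forced_pair V E d a"
  shows "O_SR V E = Outcome_B"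
proof -
  \<comment> \<open>Breaker answers a by c, b by d and vice versa; a set claiming one vertex of each
    diagonal misses one of the four forced pairs.\<close>
  define \<sigma> where "\<sigma> x = (if x = a then c else if x = c then a else if x = b then d else b)" for x
  have pairing: "\<sigma> x \<in> {a, b, c, d} \<and> \<sigma> x \<noteq> x \<and> \<sigma> (\<sigma> x) = x" if "x \<in> {a, b, c, d}" for x
    using that assms(3) unfolding \<sigma>_def by auto
  have loses: "\<not> sr_win V E M" if "\<forall>x\<in>{a, b, c, d}. x \<in> M \<longrightarrow> \<sigma> x \<notin> M" for M
  proof
    assume win: "sr_win V E M"
    have "\<not> (a \<in> M \<and> c \<in> M)" "\<not> (b \<in> M \<and> d \<in> M)"
      using that assms(3) unfolding \<sigma>_def by auto
    with sr_win_imp_forced_pair_hit[OF win assms(4)] sr_win_imp_forced_pair_hit[OF win assms(5)]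
      sr_win_imp_forced_pair_hit[OF win assms(6)] sr_win_imp_forced_pair_hit[OF win assms(7)]
    show False by blast
  qed
  have "bw_M V (sr_win V E) {} B" for B
  proof (rule breaker_pairing_strategy[OF assms(1,2) pairing])
    show "\<not> sr_win V E M" if "M \<inter> {} = {}" "\<forall>x\<in>{a, b, c, d}. x \<in> M \<longrightarrow> \<sigma> x \<notin> M" for M
      using that(2) by (rule loses)
  qed (auto simp: pairing_safe_def)
  then have "bw_M V (sr_win V E) {} {}" "bw_M V (sr_win V E) {} {a}"
    by auto
  moreover from this(2) have "bw_B V (sr_win V E) {} {}"
    using assms(2) by (intro bwB_step[of a]) auto
  ultimately show ?thesis
    by (intro O_SR_eq_Outcome_B)
qed

lemma breaker_wins_owning_cherry_centre:
  assumes "finite V" "{t, q, r} \<subseteq> V" "distinct [t, q, r]"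
    and tq: "forced_pair V E t q" and tr: "forced_pair V E t r" and "M \<inter> {t, q, r} = {}"
  shows "bw_M V (sr_win V E) M {t}"
proof -
  define \<sigma> where "\<sigma> x = (if x = q then r else q)" for x
  have pairing: "\<sigma> x \<in> {q, r} \<and> \<sigma> x \<noteq> x \<and> \<sigma> (\<sigma> x) = x" if "x \<in> {q, r}" for x
    using that \<open>distinct [t, q, r]\<close> unfolding \<sigma>_def by auto
  have loses: "\<not> sr_win V E M'" if "M' \<inter> {t} = {}" "\<forall>x\<in>{q, r}. x \<in> M' \<longrightarrow> \<sigma> x \<notin> M'" for M'
  proof
    assume win: "sr_win V E M'"
    with that(1) have "q \<in> M'" "r \<in> M'"
      using sr_win_imp_forced_pair_hit[OF win tq] sr_win_imp_forced_pair_hit[OF win tr] by auto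
    with that(2) show False
      unfolding \<sigma>_def by auto
  qed
  have "{q, r} \<subseteq> V"
    using assms(2) by blast
  from \<open>finite V\<close> this pairing loses show ?thesis
    by (rule breaker_pairing_strategy) (use assms(6) in \<open>auto simp: pairing_safe_def\<close>)
qed

lemma O_SR_eq_Outcome_B_if_two_forced_cherries:
  assumes "finite V" and "{t, q, r, t', q', r'} \<subseteq> V" and "distinct [t, q, r]" "distinct [t', q', r']"
    and "{t, q, r} \<inter> {t', q', r'} = {}"
    and "forced_pair V E t q" "forced_pair V E t r" "forced_pair V E t' q'" "forced_pair V E t' r'"
  shows "O_SR V E = Outcome_B"
proof -
  note cherry = breaker_wins_owning_cherry_centre[OF assms(1)]
  have "bw_M V (sr_win V E) {} {t}"
    using assms by (intro cherry[of t q r]) auto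
  then have breaker_first: "bw_B V (sr_win V E) {} {}"
    using assms(2) by (intro bwB_step[of t]) auto
  \<comment> \<open>Maker's first vertex lies outside at least one of the two cherries; Breaker takes its centre.\<close>
  have "bw_B V (sr_win V E) {v} {}" if "v \<in> V" for v
  proof (cases "v \<in> {t, q, r}")
    case False
    then have "bw_M V (sr_win V E) {v} {t}"
      using assms by (intro cherry[of t q r]) auto
    then show ?thesis
      using assms(2) False by (intro bwB_step[of t]) auto
  next
    case True
    with assms(5) have "bw_M V (sr_win V E) {v} {t'}"
      using assms by (intro cherry[of t' q' r']) auto
    then show ?thesis
      using assms(2,5) True by (intro bwB_step[of t']) auto
  qed
  then have "bw_M V (sr_win V E) {} {}"
    using assms(2) by (intro bwM_step) auto
  with breaker_first show ?thesis
    by (intro O_SR_eq_Outcome_B)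
qed

lemma cnbhd_self [simp]: "x \<in> cnbhd E x"
  unfolding cnbhd_def by simp

lemma cnbhd_subset: "graph V E \<Longrightarrow> x \<in> V \<Longrightarrow> cnbhd E x \<subseteq> V"
  unfolding graph_def cnbhd_def by auto

lemma cnbhd_sym: "graph V E \<Longrightarrow> x \<in> cnbhd E y \<longleftrightarrow> y \<in> cnbhd E x"
  unfolding graph_def cnbhd_def by auto

lemma universal_vertex_iff_cnbhd: "graph V E \<Longrightarrow> universal_vertex V E u \<longleftrightarrow> u \<in> V \<and> cnbhd E u = V"
  unfolding universal_vertex_def graph_def cnbhd_def by auto

lemma gamma_pair_partition:
  assumes "gamma_pair V E u w"
  shows "cnbhd E u \<inter> cnbhd E w = {}" "cnbhd E u \<union> cnbhd E w = V" "u \<in> V" "w \<in> V"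
proof -
  show disj: "cnbhd E u \<inter> cnbhd E w = {}" and cover: "cnbhd E u \<union> cnbhd E w = V"
    using assms unfolding gamma_pair_def by auto
  from cover show "u \<in> V" "w \<in> V"
    by auto
qed

lemma no_universal_vertex_if_gamma_pair:
  assumes "graph V E" "gamma_pair V E u w"
  shows "\<nexists>z. universal_vertex V E z"
proof
  assume "\<exists>z. universal_vertex V E z"
  then obtain z where "z \<in> V" "cnbhd E z = V"
    using universal_vertex_iff_cnbhd[OF assms(1)] by blast
  then have "dominating_set V E {z}"
    unfolding dominating_set_def by simp
  with assms(2) have "card {u, w} \<le> card {z}"
    unfolding gamma_pair_def min_dominating_set_def by blast
  moreover have "u \<noteq> w"
    using gamma_pair_partition(1)[OF assms(2)] cnbhd_self[of u E] by blast
  ultimately show False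
    by simp
qed

lemma gamma_pair_if_partition:
  assumes "graph V E" and no_universal: "\<nexists>z. universal_vertex V E z"
    and disj: "cnbhd E u \<inter> cnbhd E w = {}" and cover: "cnbhd E u \<union> cnbhd E w = V"
  shows "gamma_pair V E u w"
proof -
  have "u \<in> V" "w \<in> V" "u \<noteq> w"
    using cover disj cnbhd_self[of u E] cnbhd_self[of w E] by blast+
  have "card {u, w} \<le> card D" if "dominating_set V E D" for D
  proof (rule ccontr)
    assume "\<not> card {u, w} \<le> card D"
    with \<open>u \<noteq> w\<close> have "card D \<le> 1" by simp
    moreover have "finite D"
      using that assms(1) unfolding dominating_set_def graph_def by (auto intro: finite_subset)
    ultimately consider "D = {}" | z where "D = {z}"
      by (auto simp: card_le_Suc0_iff_eq)
    then show False
    proof cases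
      case 1
      with that \<open>u \<in> V\<close> show False
        unfolding dominating_set_def by auto
    next
      case 2
      with that have "universal_vertex V E z"
        unfolding dominating_set_def using universal_vertex_iff_cnbhd[OF assms(1)] by auto
      with no_universal show False by blast
    qed
  qed
  moreover have "dominating_set V E {u, w}"
    unfolding dominating_set_def using \<open>u \<in> V\<close> \<open>w \<in> V\<close> cover by auto
  ultimately show ?thesis
    unfolding gamma_pair_def min_dominating_set_def using disj cover by blast
qed

lemma far_sym: "(\<And>x y. E x y \<Longrightarrow> E y x) \<Longrightarrow> far E u v \<Longrightarrow> far E v u"
  unfolding far_def by blast

lemma cnbhd_disjoint_if_far:
  assumes "graph V E" "far E x y"
  shows "cnbhd E x \<inter> cnbhd E y = {}"
  using assms unfolding far_def graph_def cnbhd_def by blast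

lemma walk_in_vertices: "graph V E \<Longrightarrow> walk E xs \<Longrightarrow> hd xs \<in> V \<Longrightarrow> set xs \<subseteq> V"
proof (induction E xs rule: walk.induct)
  case (3 E x y xs) then show ?case unfolding graph_def by auto
qed auto

locale modular_product =
  fixes VG :: "'a set" and EG :: "'a \<Rightarrow> 'a \<Rightarrow> bool"
    and VH :: "'b set" and EH :: "'b \<Rightarrow> 'b \<Rightarrow> bool"
  assumes graph_G: "graph VG EG" and graph_H: "graph VH EH"
begin

abbreviation P :: "'a \<times> 'b \<Rightarrow> 'a \<times> 'b \<Rightarrow> bool" where
  "P \<equiv> modprod_E VG EG VH EH"

lemma edges_irrefl: "\<not> EG x x" "\<not> EH y y"
  using graph_G graph_H unfolding graph_def by blast+

text \<open>The four clauses of the modular product collapse to: both coordinates stay within their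
  closed neighbourhoods, or both leave them.\<close>
lemma P_iff:
  "P (a, b) (c, d) \<longleftrightarrow> a \<in> VG \<and> b \<in> VH \<and> c \<in> VG \<and> d \<in> VH \<and> (a, b) \<noteq> (c, d)
     \<and> (c \<in> cnbhd EG a \<longleftrightarrow> d \<in> cnbhd EH b)"
  unfolding modprod_E_def compl_edge_def cnbhd_def by (auto simp: edges_irrefl)

lemma P_sym:
  assumes "P p q"
  shows "P q p"
proof -
  obtain a b c d where pq: "p = (a, b)" "q = (c, d)"
    by fastforce
  with assms have "P (a, b) (c, d)"
    by simp
  then have "P (c, d) (a, b)"
    unfolding P_iff using cnbhd_sym[OF graph_G, of a c] cnbhd_sym[OF graph_H, of b d] by auto
  with pq show ?thesis
    by simp
qed

lemma common_neighbour_P_iff: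
  "P (a, b) (e, f) \<and> P (c, d) (e, f) \<longleftrightarrow> a \<in> VG \<and> b \<in> VH \<and> c \<in> VG \<and> d \<in> VH
     \<and> e \<in> VG \<and> f \<in> VH \<and> (e, f) \<noteq> (a, b) \<and> (e, f) \<noteq> (c, d)
     \<and> (e \<in> cnbhd EG a \<longleftrightarrow> f \<in> cnbhd EH b) \<and> (e \<in> cnbhd EG c \<longleftrightarrow> f \<in> cnbhd EH d)"
  unfolding P_iff by blast

lemma far_P_intro:
  assumes "(a, b) \<noteq> (c, d)" "\<not> (c \<in> cnbhd EG a \<longleftrightarrow> d \<in> cnbhd EH b)"
    and no_common: "\<And>e f. e \<in> VG \<Longrightarrow> f \<in> VH \<Longrightarrow> (e, f) \<noteq> (a, b) \<Longrightarrow> (e, f) \<noteq> (c, d) \<Longrightarrow>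
      (e \<in> cnbhd EG a \<longleftrightarrow> f \<in> cnbhd EH b) \<Longrightarrow> (e \<in> cnbhd EG c \<longleftrightarrow> f \<in> cnbhd EH d) \<Longrightarrow> False"
  shows "far P (a, b) (c, d)"
  unfolding far_def
proof (intro conjI notI)
  show "(a, b) = (c, d) \<Longrightarrow> False"
    using assms(1) by blast
  show "P (a, b) (c, d) \<Longrightarrow> False"
    using assms(2) unfolding P_iff by blast
  assume "\<exists>w. P (a, b) w \<and> P w (c, d)"
  then obtain e f where "P (a, b) (e, f)" "P (e, f) (c, d)"
    by auto
  then have "P (a, b) (e, f) \<and> P (c, d) (e, f)"
    using P_sym by blast
  then have "e \<in> VG" "f \<in> VH" "(e, f) \<noteq> (a, b)" "(e, f) \<noteq> (c, d)"
    "e \<in> cnbhd EG a \<longleftrightarrow> f \<in> cnbhd EH b" "e \<in> cnbhd EG c \<longleftrightarrow> f \<in> cnbhd EH d"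
    unfolding common_neighbour_P_iff by simp_all
  then show False
    by (rule no_common)
qed

lemma far_P_D:
  assumes "far P (a, b) (c, d)" "a \<in> VG" "b \<in> VH" "c \<in> VG" "d \<in> VH"
  shows "\<not> (c \<in> cnbhd EG a \<longleftrightarrow> d \<in> cnbhd EH b)"
    and "\<And>e f. e \<in> VG \<Longrightarrow> f \<in> VH \<Longrightarrow> (e, f) \<noteq> (a, b) \<Longrightarrow> (e, f) \<noteq> (c, d) \<Longrightarrow>
      (e \<in> cnbhd EG a \<longleftrightarrow> f \<in> cnbhd EH b) \<Longrightarrow> (e \<in> cnbhd EG c \<longleftrightarrow> f \<in> cnbhd EH d) \<Longrightarrow> False"
proof -
  have "(a, b) \<noteq> (c, d)"
    using assms(1) unfolding far_def by blast
  then show "\<not> (c \<in> cnbhd EG a \<longleftrightarrow> d \<in> cnbhd EH b)"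
    using assms unfolding far_def P_iff by blast
  fix e f
  assume "e \<in> VG" "f \<in> VH" "(e, f) \<noteq> (a, b)" "(e, f) \<noteq> (c, d)"
    "e \<in> cnbhd EG a \<longleftrightarrow> f \<in> cnbhd EH b" "e \<in> cnbhd EG c \<longleftrightarrow> f \<in> cnbhd EH d"
  with assms(2-5) have "P (a, b) (e, f) \<and> P (c, d) (e, f)"
    unfolding common_neighbour_P_iff by simp
  with assms(1) show False
    unfolding far_def using P_sym by blast
qed

lemma far_P_if_fst_twins:
  assumes "a \<in> VG" "b \<in> VH" "c \<in> VG" "d \<in> VH"
    and "cnbhd EG a = cnbhd EG c" "cnbhd EH b \<inter> cnbhd EH d = {}"
    and "cnbhd EH b \<union> cnbhd EH d = VH \<or> cnbhd EG a = VG"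
  shows "far P (a, b) (c, d)"
proof (rule far_P_intro)
  have "b \<noteq> d"
    using assms(6) cnbhd_self[of b EH] by blast
  then show "(a, b) \<noteq> (c, d)" by simp
  show "\<not> (c \<in> cnbhd EG a \<longleftrightarrow> d \<in> cnbhd EH b)"
    using assms(5,6) cnbhd_self[of c EG] cnbhd_self[of d EH] by blast
  fix e f
  assume "e \<in> VG" "f \<in> VH" "(e, f) \<noteq> (a, b)" "(e, f) \<noteq> (c, d)"
    and ab: "e \<in> cnbhd EG a \<longleftrightarrow> f \<in> cnbhd EH b" and cd: "e \<in> cnbhd EG c \<longleftrightarrow> f \<in> cnbhd EH d"
  with assms(5) have "f \<in> cnbhd EH b \<longleftrightarrow> f \<in> cnbhd EH d"
    by simp
  with assms(6) have "f \<notin> cnbhd EH b \<union> cnbhd EH d"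
    by blast
  moreover from this ab have "e \<notin> cnbhd EG a"
    by simp
  ultimately show False
    using assms(7) \<open>e \<in> VG\<close> \<open>f \<in> VH\<close> by blast
qed

lemma far_P_if_snd_twins:
  assumes "a \<in> VG" "b \<in> VH" "c \<in> VG" "d \<in> VH"
    and "cnbhd EH b = cnbhd EH d" "cnbhd EG a \<inter> cnbhd EG c = {}" "cnbhd EG a \<union> cnbhd EG c = VG"
  shows "far P (a, b) (c, d)"
proof (rule far_P_intro)
  have "a \<noteq> c"
    using assms(6) cnbhd_self[of a EG] by blast
  then show "(a, b) \<noteq> (c, d)" by simp
  show "\<not> (c \<in> cnbhd EG a \<longleftrightarrow> d \<in> cnbhd EH b)"
    using assms(5,6) cnbhd_self[of c EG] cnbhd_self[of d EH] by blast
  fix e f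
  assume "e \<in> VG" "f \<in> VH" "(e, f) \<noteq> (a, b)" "(e, f) \<noteq> (c, d)"
    and ab: "e \<in> cnbhd EG a \<longleftrightarrow> f \<in> cnbhd EH b" and cd: "e \<in> cnbhd EG c \<longleftrightarrow> f \<in> cnbhd EH d"
  with assms(5) have "e \<in> cnbhd EG a \<longleftrightarrow> e \<in> cnbhd EG c"
    by simp
  with assms(6,7) \<open>e \<in> VG\<close> show False
    by blast
qed

lemma far_P_imp_fst_in_cnbhd:
  assumes no_universal_H: "\<forall>y\<in>VH. cnbhd EH y \<noteq> VH"
    and no_partition_G: "\<forall>x\<in>VG. \<forall>z\<in>VG. cnbhd EG x \<inter> cnbhd EG z = {} \<longrightarrow> cnbhd EG x \<union> cnbhd EG z \<noteq> VG"
    and abcd: "a \<in> VG" "b \<in> VH" "c \<in> VG" "d \<in> VH" and far: "far P (a, b) (c, d)"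
  shows "c \<in> cnbhd EG a"
proof (rule ccontr)
  assume "c \<notin> cnbhd EG a"
  note no_common = far_P_D(2)[OF far abcd]
  from \<open>c \<notin> cnbhd EG a\<close> far_P_D(1)[OF far abcd] have "d \<in> cnbhd EH b" "b \<in> cnbhd EH d" "a \<notin> cnbhd EG c"
    using cnbhd_sym[OF graph_G] cnbhd_sym[OF graph_H] by auto
  have "cnbhd EG a \<inter> cnbhd EG c = {}"
  proof (rule ccontr)
    assume "cnbhd EG a \<inter> cnbhd EG c \<noteq> {}"
    then obtain e where e: "e \<in> cnbhd EG a" "e \<in> cnbhd EG c"
      by blast
    with \<open>a \<in> VG\<close> have "e \<in> VG"
      using cnbhd_subset[OF graph_G] by blast
    from this abcd(2) show False
      by (rule no_common)
        (use e \<open>c \<notin> cnbhd EG a\<close> \<open>a \<notin> cnbhd EG c\<close> \<open>b \<in> cnbhd EH d\<close> in auto)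
  qed
  with no_partition_G abcd(1,3) cnbhd_subset[OF graph_G] obtain e
    where e: "e \<in> VG" "e \<notin> cnbhd EG a" "e \<notin> cnbhd EG c"
    by blast
  from no_universal_H abcd(2) cnbhd_subset[OF graph_H] obtain f where f: "f \<in> VH" "f \<notin> cnbhd EH b"
    by blast
  show False
  proof (cases "f \<in> cnbhd EH d")
    case False
    from e(1) f(1) show False
      by (rule no_common) (use e f False in auto)
  next
    case True
    from abcd(3) f(1) show False
      by (rule no_common) (use f True \<open>c \<notin> cnbhd EG a\<close> \<open>d \<in> cnbhd EH b\<close> in auto)
  qed
qed

lemma cnbhd_partition_if_far_P:
  assumes no_universal_G: "\<forall>x\<in>VG. cnbhd EG x \<noteq> VG"
    and abcd: "a \<in> VG" "b \<in> VH" "c \<in> VG" "d \<in> VH" and far: "far P (a, b) (c, d)"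
    and "c \<in> cnbhd EG a"
  shows "cnbhd EH b \<inter> cnbhd EH d = {}" "cnbhd EH b \<union> cnbhd EH d = VH"
proof -
  note no_common = far_P_D(2)[OF far abcd]
  from \<open>c \<in> cnbhd EG a\<close> far_P_D(1)[OF far abcd] have "d \<notin> cnbhd EH b" "b \<notin> cnbhd EH d" "a \<in> cnbhd EG c"
    using cnbhd_sym[OF graph_G] cnbhd_sym[OF graph_H] by auto
  show "cnbhd EH b \<inter> cnbhd EH d = {}"
  proof (rule ccontr)
    assume "cnbhd EH b \<inter> cnbhd EH d \<noteq> {}"
    then obtain f where f: "f \<in> cnbhd EH b" "f \<in> cnbhd EH d"
      by blast
    with \<open>b \<in> VH\<close> have "f \<in> VH"
      using cnbhd_subset[OF graph_H] by blast
    with abcd(1) show False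
      by (rule no_common) (use f \<open>d \<notin> cnbhd EH b\<close> \<open>b \<notin> cnbhd EH d\<close> \<open>a \<in> cnbhd EG c\<close> in auto)
  qed
  show "cnbhd EH b \<union> cnbhd EH d = VH"
  proof (rule ccontr)
    assume "cnbhd EH b \<union> cnbhd EH d \<noteq> VH"
    with abcd cnbhd_subset[OF graph_H] obtain f where f: "f \<in> VH" "f \<notin> cnbhd EH b" "f \<notin> cnbhd EH d"
      by blast
    from no_universal_G abcd(1) cnbhd_subset[OF graph_G] obtain e where e: "e \<in> VG" "e \<notin> cnbhd EG a"
      by blast
    show False
    proof (cases "e \<in> cnbhd EG c")
      case False
      from e(1) f(1) show False
        by (rule no_common) (use e f False in auto)
    next
      case True
      from e(1) abcd(4) show False
        by (rule no_common) (use e True \<open>c \<in> cnbhd EG a\<close> \<open>d \<notin> cnbhd EH b\<close> in auto)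
    qed
  qed
qed

lemma walk_P_fst:
  "walk EG xs \<Longrightarrow> set xs \<subseteq> VG \<Longrightarrow> h \<in> VH \<Longrightarrow> walk P (map (\<lambda>a. (a, h)) xs)"
  by (induction EG xs rule: walk.induct) (auto simp: modprod_E_def)

lemma walk_P_snd:
  "walk EH xs \<Longrightarrow> set xs \<subseteq> VH \<Longrightarrow> g \<in> VG \<Longrightarrow> walk P (map (\<lambda>b. (g, b)) xs)"
  by (induction EH xs rule: walk.induct) (auto simp: modprod_E_def)

lemma reachable_P:
  assumes "connected_graph VG EG" "connected_graph VH EH"
    and "(g, h) \<in> VG \<times> VH" "(g', h') \<in> VG \<times> VH"
  shows "reachable P (g, h) (g', h')"
proof -
  obtain xs where xs: "walk EG xs" "hd xs = g" "last xs = g'"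
    using assms(1,3,4) unfolding connected_graph_def by blast
  obtain ys where ys: "walk EH ys" "hd ys = h" "last ys = h'"
    using assms(2,3,4) unfolding connected_graph_def by blast
  have "xs \<noteq> []" "ys \<noteq> []"
    using xs(1) ys(1) by auto
  have "set xs \<subseteq> VG" "set ys \<subseteq> VH"
    using walk_in_vertices[OF graph_G xs(1)] walk_in_vertices[OF graph_H ys(1)] xs ys assms(3) by auto
  then have "walk P (map (\<lambda>a. (a, h)) xs)" "walk P (map (\<lambda>b. (g', b)) ys)"
    using walk_P_fst[OF xs(1)] walk_P_snd[OF ys(1)] assms(3,4) by auto
  then have "reachable P (g, h) (g', h)" "reachable P (g', h) (g', h')"
    unfolding reachable_def using xs ys \<open>xs \<noteq> []\<close> \<open>ys \<noteq> []\<close> by (force simp: hd_map last_map)+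
  then show ?thesis
    by (rule reachable_trans)
qed

end

locale modular_product_diam_3 = modular_product +
  assumes connected_G: "connected_graph VG EG" and connected_H: "connected_graph VH EH"
    and diam_3: "diam (VG \<times> VH) P = 3"
begin

lemma finite_vertices: "finite (VG \<times> VH)"
  using graph_G graph_H unfolding graph_def by simp

lemma P_connected: "\<forall>p\<in>VG \<times> VH. \<forall>q\<in>VG \<times> VH. reachable P p q"
  using reachable_P[OF connected_G connected_H] by auto

lemma forced_pair_if_far:
  assumes "p \<in> VG \<times> VH" "q \<in> VG \<times> VH" "far P p q"
  shows "forced_pair (VG \<times> VH) P p q"
proof (rule forced_pair_if_mutually_maximally_distant[OF P_connected assms(1,2)])
  show "p \<noteq> q"
    using assms(3) unfolding far_def by blast
  have "\<forall>x\<in>VG \<times> VH. \<forall>y\<in>VG \<times> VH. gdist P x y \<le> 3"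
    using gdist_le_diam[OF finite_vertices] diam_3 by metis
  moreover have "far P q p"
    using P_sym assms(3) by (rule far_sym)
  ultimately show "mutually_maximally_distant (VG \<times> VH) P p q"
    using P_connected assms by (intro mutually_maximally_distant_if_far)
qed

lemma forced_pair_if_fst_twins:
  assumes "a \<in> VG" "b \<in> VH" "c \<in> VG" "d \<in> VH"
    and "cnbhd EG a = cnbhd EG c" "cnbhd EH b \<inter> cnbhd EH d = {}"
    and "cnbhd EH b \<union> cnbhd EH d = VH \<or> cnbhd EG a = VG"
  shows "forced_pair (VG \<times> VH) P (a, b) (c, d)"
  using assms by (intro forced_pair_if_far far_P_if_fst_twins) auto

lemma forced_pair_if_snd_twins:
  assumes "a \<in> VG" "b \<in> VH" "c \<in> VG" "d \<in> VH"
    and "cnbhd EH b = cnbhd EH d" "cnbhd EG a \<inter> cnbhd EG c = {}" "cnbhd EG a \<union> cnbhd EG c = VG"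
  shows "forced_pair (VG \<times> VH) P (a, b) (c, d)"
  using assms by (intro forced_pair_if_far far_P_if_snd_twins) auto

lemma forced_pair_if_eccentricity_le_2:
  assumes "p \<in> VG \<times> VH" "q \<in> VG \<times> VH" "p \<noteq> q" "\<not> P p q"
    and "\<forall>z\<in>VG \<times> VH. \<not> far P p z \<and> \<not> far P q z"
  shows "forced_pair (VG \<times> VH) P p q"
proof (rule forced_pair_if_mutually_maximally_distant[OF P_connected assms(1-3)])
  have "\<not> P q p"
    using assms(4) P_sym by blast
  with assms show "mutually_maximally_distant (VG \<times> VH) P p q"
    using P_connected by (intro mutually_maximally_distant_if_eccentricity_le_2) auto
qed

lemma O_SR_eq_Outcome_B_if_gamma_pairs:
  assumes "gamma_pair VG EG g g'" "gamma_pair VH EH h h'"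
  shows "O_SR (VG \<times> VH) P = Outcome_B"
proof -
  note G = gamma_pair_partition[OF assms(1)] and H = gamma_pair_partition[OF assms(2)]
  have "g \<noteq> g'" "h \<noteq> h'"
    using G(1) H(1) cnbhd_self[of g EG] cnbhd_self[of h EH] by blast+
  show ?thesis
  proof (rule O_SR_eq_Outcome_B_if_forced_4_cycle[OF finite_vertices])
    show "{(g, h), (g, h'), (g', h'), (g', h)} \<subseteq> VG \<times> VH"
      using G H by auto
    show "distinct [(g, h), (g, h'), (g', h'), (g', h)]"
      using \<open>g \<noteq> g'\<close> \<open>h \<noteq> h'\<close> by auto
    show "forced_pair (VG \<times> VH) P (g, h) (g, h')" "forced_pair (VG \<times> VH) P (g', h') (g', h)"
      by (rule forced_pair_if_fst_twins; use G H in \<open>simp add: Int_commute Un_commute\<close>)+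
    show "forced_pair (VG \<times> VH) P (g, h') (g', h')" "forced_pair (VG \<times> VH) P (g', h) (g, h)"
      by (rule forced_pair_if_snd_twins; use G H in \<open>simp add: Int_commute Un_commute\<close>)+
  qed
qed

lemma O_SR_eq_Outcome_B_if_fst_twins:
  assumes "u \<in> VG" "u' \<in> VG" "u \<noteq> u'" "cnbhd EG u = cnbhd EG u'"
    and "x \<in> VH" "y \<in> VH" "cnbhd EH x \<inter> cnbhd EH y = {}"
    and "cnbhd EH x \<union> cnbhd EH y = VH \<or> cnbhd EG u = VG"
  shows "O_SR (VG \<times> VH) P = Outcome_B"
proof (rule O_SR_eq_Outcome_B_if_forced_4_cycle[OF finite_vertices])
  have "x \<noteq> y"
    using assms(7) cnbhd_self[of x EH] by blast
  with assms(3) show "distinct [(u, x), (u, y), (u', x), (u', y)]"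
    by auto
  show "{(u, x), (u, y), (u', x), (u', y)} \<subseteq> VG \<times> VH"
    using assms by auto
  show "forced_pair (VG \<times> VH) P (u, x) (u, y)" "forced_pair (VG \<times> VH) P (u, y) (u', x)"
    "forced_pair (VG \<times> VH) P (u', x) (u', y)" "forced_pair (VG \<times> VH) P (u', y) (u, x)"
    by (rule forced_pair_if_fst_twins; use assms in \<open>simp add: Int_commute Un_commute\<close>)+
qed

lemma O_SR_eq_Outcome_B_if_two_universal_vertices:
  assumes "u \<noteq> u'" "universal_vertex VG EG u" "universal_vertex VG EG u'" "3 \<le> diam VH EH"
  shows "O_SR (VG \<times> VH) P = Outcome_B"
proof -
  have "finite VH" "VH \<noteq> {}"
    using graph_H connected_H unfolding graph_def connected_graph_def by auto
  then obtain x y where "x \<in> VH" "y \<in> VH" "far EH x y"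
    using assms(4) by (rule far_pair_if_diam_ge_3)
  with assms(1-3) show ?thesis
    using cnbhd_disjoint_if_far[OF graph_H] universal_vertex_iff_cnbhd[OF graph_G]
    by (intro O_SR_eq_Outcome_B_if_fst_twins[of u u' x y]) auto
qed

lemma O_SR_eq_Outcome_B_if_adjacent_twins_and_gamma_pair:
  assumes "adjacent_twins VG EG g1 g2" "gamma_pair VH EH h h'"
  shows "O_SR (VG \<times> VH) P = Outcome_B"
proof -
  note H = gamma_pair_partition[OF assms(2)]
  from assms(1) have "g1 \<in> VG" "g2 \<in> VG" "g1 \<noteq> g2" "cnbhd EG g1 = cnbhd EG g2"
    unfolding adjacent_twins_def by auto
  from this H(3,4,1) disjI1[OF H(2)] show ?thesis
    by (rule O_SR_eq_Outcome_B_if_fst_twins)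
qed

lemma O_SR_eq_Outcome_B_if_shared_gamma_partner:
  assumes "a \<in> VG" "a' \<in> VG" "a \<noteq> a'"
    and "gamma_pair VH EH h1 h" "gamma_pair VH EH h2 h" "h1 \<noteq> h2"
  shows "O_SR (VG \<times> VH) P = Outcome_B"
proof -
  note H1 = gamma_pair_partition[OF assms(4)] and H2 = gamma_pair_partition[OF assms(5)]
  have "h \<noteq> h1" "h \<noteq> h2"
    using H1(1) H2(1) cnbhd_self[of h EH] by blast+
  have forced: "forced_pair (VG \<times> VH) P (b, h) (b, h1)" "forced_pair (VG \<times> VH) P (b, h) (b, h2)"
    if "b \<in> VG" for b
    by (rule forced_pair_if_fst_twins; use that H1 H2 in \<open>simp add: Int_commute Un_commute\<close>)+
  show ?thesis
    by (rule O_SR_eq_Outcome_B_if_two_forced_cherries[OF finite_vertices _ _ _ _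
          forced[OF assms(1)] forced[OF assms(2)]])
      (use assms(1-3,6) H1 H2 \<open>h \<noteq> h1\<close> \<open>h \<noteq> h2\<close> in auto)
qed

lemma no_far_vertex_if_outside_gamma_pairs:
  assumes no_gamma_G: "\<nexists>g g'. gamma_pair VG EG g g'" and no_universal_G: "\<nexists>u. universal_vertex VG EG u"
    and no_universal_H: "\<nexists>u. universal_vertex VH EH u"
    and "g \<in> VG" "w \<in> VH" and outside: "\<forall>z. \<not> gamma_pair VH EH w z"
  shows "\<forall>z\<in>VG \<times> VH. \<not> far P (g, w) z"
proof (intro ballI notI)
  fix z assume "z \<in> VG \<times> VH" "far P (g, w) z"
  then obtain c d where cd: "c \<in> VG" "d \<in> VH" and far: "far P (g, w) (c, d)"
    by auto
  have no_universal: "\<forall>a\<in>VG. cnbhd EG a \<noteq> VG" "\<forall>b\<in>VH. cnbhd EH b \<noteq> VH"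
    using no_universal_G no_universal_H
      universal_vertex_iff_cnbhd[OF graph_G] universal_vertex_iff_cnbhd[OF graph_H] by blast+
  have no_partition:
    "\<forall>a\<in>VG. \<forall>c\<in>VG. cnbhd EG a \<inter> cnbhd EG c = {} \<longrightarrow> cnbhd EG a \<union> cnbhd EG c \<noteq> VG"
    using no_gamma_G gamma_pair_if_partition[OF graph_G no_universal_G] by blast
  from no_universal(2) no_partition assms(4,5) cd far have "c \<in> cnbhd EG g"
    by (rule far_P_imp_fst_in_cnbhd)
  with no_universal(1) assms(4,5) cd far have "cnbhd EH w \<inter> cnbhd EH d = {}" "cnbhd EH w \<union> cnbhd EH d = VH"
    by (rule cnbhd_partition_if_far_P)+
  then have "gamma_pair VH EH w d"
    by (rule gamma_pair_if_partition[OF graph_H no_universal_H])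
  with outside show False
    by blast
qed

lemma O_SR_eq_Outcome_B_if_two_vertices_outside_gamma_pairs:
  assumes no_gamma_G: "\<nexists>g g'. gamma_pair VG EG g g'" and no_universal_G: "\<nexists>u. universal_vertex VG EG u"
    and "\<not> complete_graph VG EG" and "gamma_pair VH EH h h'"
    and xy: "x \<in> VH" "y \<in> VH" "x \<noteq> y"
    and outside: "\<forall>z. \<not> gamma_pair VH EH x z" "\<forall>z. \<not> gamma_pair VH EH y z"
  shows "O_SR (VG \<times> VH) P = Outcome_B"
proof -
  have "\<nexists>u. universal_vertex VH EH u"
    using graph_H \<open>gamma_pair VH EH h h'\<close> by (rule no_universal_vertex_if_gamma_pair)
  then have eccentricity: "\<forall>z\<in>VG \<times> VH. \<not> far P (g, w) z" if "g \<in> VG" "w \<in> {x, y}" for g w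
    using that xy outside by (intro no_far_vertex_if_outside_gamma_pairs[OF no_gamma_G no_universal_G]) auto
  have forced: "forced_pair (VG \<times> VH) P (g1, w1) (g2, w2)"
    if "g1 \<in> VG" "g2 \<in> VG" "w1 \<in> {x, y}" "w2 \<in> {x, y}" "(g1, w1) \<noteq> (g2, w2)"
      "\<not> P (g1, w1) (g2, w2)" for g1 g2 w1 w2
    using that xy eccentricity[OF that(1,3)] eccentricity[OF that(2,4)]
    by (intro forced_pair_if_eccentricity_le_2) auto
  obtain g g' where g: "g \<in> VG" "g' \<in> VG" "g \<noteq> g'" "g' \<notin> cnbhd EG g"
    using \<open>\<not> complete_graph VG EG\<close> unfolding complete_graph_def cnbhd_def by auto
  then have "g \<notin> cnbhd EG g'"
    using cnbhd_sym[OF graph_G] by blast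
  show ?thesis
  proof (cases "y \<in> cnbhd EH x")
    case True
    then have "x \<in> cnbhd EH y"
      using cnbhd_sym[OF graph_H] by blast
    show ?thesis
    proof (rule O_SR_eq_Outcome_B_if_forced_4_cycle[OF finite_vertices])
      show "{(g, x), (g', x), (g, y), (g', y)} \<subseteq> VG \<times> VH" "distinct [(g, x), (g', x), (g, y), (g', y)]"
        using g xy by auto
      show "forced_pair (VG \<times> VH) P (g, x) (g', x)" "forced_pair (VG \<times> VH) P (g', x) (g, y)"
        "forced_pair (VG \<times> VH) P (g, y) (g', y)" "forced_pair (VG \<times> VH) P (g', y) (g, x)"
        by (rule forced; use g xy True \<open>g \<notin> cnbhd EG g'\<close> \<open>x \<in> cnbhd EH y\<close> in \<open>simp add: P_iff\<close>)+
    qed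
  next
    case False
    then have "x \<notin> cnbhd EH y"
      using cnbhd_sym[OF graph_H] by blast
    show ?thesis
    proof (rule O_SR_eq_Outcome_B_if_forced_4_cycle[OF finite_vertices])
      show "{(g, x), (g, y), (g', y), (g', x)} \<subseteq> VG \<times> VH" "distinct [(g, x), (g, y), (g', y), (g', x)]"
        using g xy by auto
      show "forced_pair (VG \<times> VH) P (g, x) (g, y)" "forced_pair (VG \<times> VH) P (g, y) (g', y)"
        "forced_pair (VG \<times> VH) P (g', y) (g', x)" "forced_pair (VG \<times> VH) P (g', x) (g, x)"
        by (rule forced; use g xy False \<open>g \<notin> cnbhd EG g'\<close> \<open>x \<notin> cnbhd EH y\<close> in \<open>simp add: P_iff\<close>)+
    qed
  qed
qed

end

theorem mainTheorem18:
  fixes VG :: "'a set" and EG :: "'a \<Rightarrow> 'a \<Rightarrow> bool"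
    and VH :: "'b set" and EH :: "'b \<Rightarrow> 'b \<Rightarrow> bool"
  assumes "graph VG EG" and "graph VH EH"
    and "connected_graph VG EG" and "connected_graph VH EH"
    and "card VG \<ge> 2" and "card VH \<ge> 2"
    and "\<not> complete_graph VG EG" and "\<not> complete_graph VH EH"
    and "diam (VG \<times> VH) (modprod_E VG EG VH EH) = 3"
  shows
   "((\<exists>g g' h h'. gamma_pair VG EG g g' \<and> gamma_pair VH EH h h')
       \<longrightarrow> O_SR (VG \<times> VH) (modprod_E VG EG VH EH) = Outcome_B)
  \<and> ((\<exists>u u'. u \<noteq> u' \<and> universal_vertex VG EG u \<and> universal_vertex VG EG u')
       \<and> diam VH EH \<ge> 3
       \<longrightarrow> O_SR (VG \<times> VH) (modprod_E VG EG VH EH) = Outcome_B)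
  \<and> ((\<nexists>g g'. gamma_pair VG EG g g') \<and> (\<nexists>u. universal_vertex VG EG u)
       \<and> (\<exists>g1 g2. adjacent_twins VG EG g1 g2) \<and> (\<exists>h h'. gamma_pair VH EH h h')
       \<longrightarrow> O_SR (VG \<times> VH) (modprod_E VG EG VH EH) = Outcome_B)
  \<and> ((\<nexists>g g'. gamma_pair VG EG g g') \<and> (\<nexists>u. universal_vertex VG EG u)
       \<and> (\<exists>h h'. gamma_pair VH EH h h')
       \<and> (\<exists>x\<in>VH. \<exists>y\<in>VH. x \<noteq> y
            \<and> (\<forall>z. \<not> gamma_pair VH EH x z \<and> \<not> gamma_pair VH EH z x)
            \<and> (\<forall>z. \<not> gamma_pair VH EH y z \<and> \<not> gamma_pair VH EH z y))
       \<longrightarrow> O_SR (VG \<times> VH) (modprod_E VG EG VH EH) = Outcome_B)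
  \<and> ((\<nexists>g g'. gamma_pair VG EG g g') \<and> (\<nexists>u. universal_vertex VG EG u)
       \<and> (\<exists>h1 h2 h. adjacent_twins VH EH h1 h2 \<and> h \<in> VH - {h1, h2}
            \<and> gamma_pair VH EH h1 h \<and> gamma_pair VH EH h2 h)
       \<longrightarrow> O_SR (VG \<times> VH) (modprod_E VG EG VH EH) = Outcome_B)"
proof -
  interpret modular_product_diam_3 VG EG VH EH
    using assms(1-4,9) by unfold_locales
  obtain a a' where "a \<in> VG" "a' \<in> VG" "a \<noteq> a'"
    using assms(7) unfolding complete_graph_def by blast
  \<comment> \<open>Cases (c) and (e) hold without assuming that G has no gamma-pair and no universal
    vertex, and (e) only uses that h1 and h2 are distinct.\<close>
  note cases = O_SR_eq_Outcome_B_if_gamma_pairs O_SR_eq_Outcome_B_if_two_universal_vertices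
    O_SR_eq_Outcome_B_if_adjacent_twins_and_gamma_pair
    O_SR_eq_Outcome_B_if_two_vertices_outside_gamma_pairs[OF _ _ assms(7)]
    O_SR_eq_Outcome_B_if_shared_gamma_partner[OF \<open>a \<in> VG\<close> \<open>a' \<in> VG\<close> \<open>a \<noteq> a'\<close>]
  show ?thesis
  proof (intro conjI impI; elim exE conjE bexE)
  qed (use cases in \<open>auto simp: adjacent_twins_def\<close>)
qed

end
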